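(* Let $\sigma$ and $\tau$ be compositions of the same positive integer $m$. Then the map $\Psi_{\sigma,\tau}:\Gamma(\mathsf{hypo},\sigma)\to\Gamma(\mathsf{hypo},\tau)$, $T\mapsto\pi_\tau(\overline{T})$, is an isomorphism of unlabelled directed graphs.
   Context: Entries are positive integers. A quasi-array of size $m$ is an array $Q$ with cells $(i,j)$, $1\le i\le m$, $1\le j\le m-i+1$, each containing a positive integer, with first row weakly increasing and $Q_{(i,j)}=Q_{(1,i+j-1)}+i-1$. A quasi-ribbon tableau of shape $\sigma=(\sigma_1,\dots,\sigma_r)$ is a filling with positive integers of the diagram having $\sigma_i$ cells in row $i$, the leftmost cell of row $i+1$ directly below the rightmost cell of row $i$, weakly increasing along rows and strictly increasing down columns. Its column reading is the word read column by column left to right, each column bottom to top. Quasi-Kashiwara operator $f_i$ on a word $u$: undefined if $u$ contains a subsequence $(i+1)\,i$ or contains no $i$; otherwise replaces the rightmost $i$ by $i+1$. $\Gamma(\mathsf{hypo},\sigma)$ is the directed graph whose vertices are the quasi-ribbon tableaux of shape $\sigma$ (identified with their column readings), with an edge $u\to f_i(u)$ labelled $i$ whenever defined. For a quasi-array $Q$ of size $m$ and composition $\tau$ of $m$, $\pi_\tau(Q)$ is the quasi-ribbon tableau formed by the cells of $Q$ making up a quasi-ribbon diagram of shape $\tau$ whose first cell is $(1,1)$. For a quasi-ribbon tableau $T$ of shape $\sigma$ with $m$ cells, $\overline{T}$ is the unique quasi-array of size $m$ with $\pi_\sigma(\overline{T})=T$. *)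

theory Defs
  imports Main
begin

(* Conventions: all coordinates (row i, column j) are 1-based, as in the paper.
   Rows are numbered top to bottom, columns left to right.
   Tableaux and quasi-arrays are functions nat \<times> nat \<Rightarrow> nat that are 0 outside
   their set of cells (so that a filling is a unique object). *)

definition is_composition :: "nat \<Rightarrow> nat list \<Rightarrow> bool" where
  "is_composition m \<sigma> \<longleftrightarrow> (\<forall>x\<in>set \<sigma>. 0 < x) \<and> sum_list \<sigma> = m"

(* column of the leftmost cell of row i (1-based) of the quasi-ribbon diagram of shape \<sigma>:
   the leftmost cell of row i+1 lies directly below the rightmost cell of row i *)
definition qr_row_start :: "nat list \<Rightarrow> nat \<Rightarrow> nat" where
  "qr_row_start \<sigma> i = 1 + sum_list (map (\<lambda>x. x - 1) (take (i - 1) \<sigma>))"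

definition qr_diagram :: "nat list \<Rightarrow> (nat \<times> nat) set" where
  "qr_diagram \<sigma> = {(i, j). 1 \<le> i \<and> i \<le> length \<sigma> \<and>
      qr_row_start \<sigma> i \<le> j \<and> j < qr_row_start \<sigma> i + \<sigma> ! (i - 1)}"

definition is_qr_tableau :: "nat list \<Rightarrow> (nat \<times> nat \<Rightarrow> nat) \<Rightarrow> bool" where
  "is_qr_tableau \<sigma> T \<longleftrightarrow>
     (\<forall>c. c \<notin> qr_diagram \<sigma> \<longrightarrow> T c = 0) \<and>
     (\<forall>c\<in>qr_diagram \<sigma>. 1 \<le> T c) \<and>
     (\<forall>i j. (i, j) \<in> qr_diagram \<sigma> \<and> (i, Suc j) \<in> qr_diagram \<sigma> \<longrightarrow> T (i, j) \<le> T (i, Suc j)) \<and>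
     (\<forall>i j. (i, j) \<in> qr_diagram \<sigma> \<and> (Suc i, j) \<in> qr_diagram \<sigma> \<longrightarrow> T (i, j) < T (Suc i, j))"

definition col_reading :: "nat list \<Rightarrow> (nat \<times> nat \<Rightarrow> nat) \<Rightarrow> nat list" where
  "col_reading \<sigma> T = concat (map (\<lambda>j. map (\<lambda>i. T (i, j))
       (rev (filter (\<lambda>i. (i, j) \<in> qr_diagram \<sigma>) [1..<Suc (length \<sigma>)])))
     [1..<Suc (sum_list \<sigma>)])"

definition qk_f :: "nat \<Rightarrow> nat list \<Rightarrow> nat list option" where
  "qk_f i u = (if i \<notin> set u \<or>
                  (\<exists>p q. p < q \<and> q < length u \<and> u ! p = i + 1 \<and> u ! q = i)
               then None
               else Some (u[Max {k. k < length u \<and> u ! k = i} := i + 1]))"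

(* the graph \<Gamma>(hypo, \<sigma>): vertices the quasi-ribbon tableaux of shape \<sigma>
   (identified with their column readings) *)
definition hypo_vertices :: "nat list \<Rightarrow> (nat \<times> nat \<Rightarrow> nat) set" where
  "hypo_vertices \<sigma> = {T. is_qr_tableau \<sigma> T}"

definition hypo_edges :: "nat list \<Rightarrow> ((nat \<times> nat \<Rightarrow> nat) \<times> (nat \<times> nat \<Rightarrow> nat)) set" where
  "hypo_edges \<sigma> = {(T, T'). T \<in> hypo_vertices \<sigma> \<and> T' \<in> hypo_vertices \<sigma> \<and>
      (\<exists>i\<ge>1. qk_f i (col_reading \<sigma> T) = Some (col_reading \<sigma> T'))}"

definition is_quasi_array :: "nat \<Rightarrow> (nat \<times> nat \<Rightarrow> nat) \<Rightarrow> bool" where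
  "is_quasi_array m Q \<longleftrightarrow>
     (\<forall>i j. \<not> (1 \<le> i \<and> i \<le> m \<and> 1 \<le> j \<and> j \<le> m - i + 1) \<longrightarrow> Q (i, j) = 0) \<and>
     (\<forall>i j. 1 \<le> i \<and> i \<le> m \<and> 1 \<le> j \<and> j \<le> m - i + 1 \<longrightarrow>
            1 \<le> Q (i, j) \<and> Q (i, j) = Q (1, i + j - 1) + (i - 1)) \<and>
     (\<forall>j. 1 \<le> j \<and> j < m \<longrightarrow> Q (1, j) \<le> Q (1, Suc j))"

definition qa_proj :: "nat list \<Rightarrow> (nat \<times> nat \<Rightarrow> nat) \<Rightarrow> (nat \<times> nat \<Rightarrow> nat)" where
  "qa_proj \<tau> Q = (\<lambda>c. if c \<in> qr_diagram \<tau> then Q c else 0)"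

definition qa_bar :: "nat list \<Rightarrow> (nat \<times> nat \<Rightarrow> nat) \<Rightarrow> (nat \<times> nat \<Rightarrow> nat)" where
  "qa_bar \<sigma> T = (THE Q. is_quasi_array (sum_list \<sigma>) Q \<and> qa_proj \<sigma> Q = T)"

definition Psi :: "nat list \<Rightarrow> nat list \<Rightarrow> (nat \<times> nat \<Rightarrow> nat) \<Rightarrow> (nat \<times> nat \<Rightarrow> nat)" where
  "Psi \<sigma> \<tau> T = qa_proj \<tau> (qa_bar \<sigma> T)"

definition digraph_iso ::
  "('a \<Rightarrow> 'b) \<Rightarrow> 'a set \<Rightarrow> ('a \<times> 'a) set \<Rightarrow> 'b set \<Rightarrow> ('b \<times> 'b) set \<Rightarrow> bool" where
  "digraph_iso \<phi> V E V' E' \<longleftrightarrow> bij_betw \<phi> V V' \<and>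
     (\<forall>u\<in>V. \<forall>v\<in>V. (u, v) \<in> E \<longleftrightarrow> (\<phi> u, \<phi> v) \<in> E')"

end

theory Submission
  imports Defs
begin

(* A quasi-array is determined by its first row: the entry in cell (i, j) is
   Q (1, i + j - 1) + (i - 1).  The diagram of a composition \<sigma> of m meets every diagonal
   i + j - 1 = k, 1 \<le> k \<le> m, in exactly one cell, and the cells on consecutive diagonals
   are adjacent (right or below).  Hence \<pi>_\<sigma> is a bijection from quasi-arrays of size m
   onto the quasi-ribbon tableaux of shape \<sigma>.
   On the column reading of \<pi>_\<sigma>(Q), a defined f_i raises the last cell c carrying i, i.e.
   it raises the first-row entry on the diagonal k of c.  It is defined exactly when that
   entry is strictly smaller than the one on diagonal k + 1: otherwise the cell of diagonal
   k + 1 carries i to the right of c, or i + 1 below c (and so is read before c).  This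
   edge relation on quasi-arrays does not involve \<sigma>, so \<Psi>_\<sigma>\<tau> = \<pi>_\<tau> \<circ> \<pi>_\<sigma>^-1 is a
   graph isomorphism. *)

lemma sorted_wrt_concat_map:
  assumes "sorted_wrt Q xs"
    and "\<And>x. x \<in> set xs \<Longrightarrow> sorted_wrt R (f x)"
    and "\<And>x y a b. x \<in> set xs \<Longrightarrow> y \<in> set xs \<Longrightarrow> Q x y \<Longrightarrow> a \<in> set (f x) \<Longrightarrow> b \<in> set (f y) \<Longrightarrow> R a b"
  shows "sorted_wrt R (concat (map f xs))"
  using assms
proof (induction xs)
  case (Cons x xs)
  have "sorted_wrt R (concat (map f xs))"
  proof (rule Cons.IH)
    show "\<And>y z a b. y \<in> set xs \<Longrightarrow> z \<in> set xs \<Longrightarrow> Q y z \<Longrightarrow> a \<in> set (f y) \<Longrightarrow> b \<in> set (f z)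
        \<Longrightarrow> R a b"
      using Cons.prems(3) by (metis list.set_intros(2))
  qed (use Cons.prems(1,2) in auto)
  moreover have "\<forall>a\<in>set (f x). \<forall>b\<in>set (concat (map f xs)). R a b"
    using Cons.prems(1) by (auto intro: Cons.prems(3))
  ultimately show ?case using Cons.prems(2) by (simp add: sorted_wrt_append)
qed simp

lemma sorted_wrt_nth_iff_less:
  assumes "sorted_wrt R xs" and "\<And>x y. R x y \<Longrightarrow> \<not> R y x"
    and "p < length xs" and "q < length xs"
  shows "R (xs ! p) (xs ! q) \<longleftrightarrow> p < q"
proof
  assume R: "R (xs ! p) (xs ! q)"
  show "p < q"
  proof (rule ccontr)
    assume "\<not> p < q"
    then consider "p = q" | "q < p" by linarith
    then show False
    proof cases
      case 2
      with assms(1) have "R (xs ! q) (xs ! p)" using assms(3) by (rule sorted_wrt_nth_less)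
      then show False using R assms(2) by blast
    qed (use R assms(2) in blast)
  qed
next
  assume "p < q"
  with assms(1) show "R (xs ! p) (xs ! q)" using assms(4) by (rule sorted_wrt_nth_less)
qed

lemma sorted_wrt_asym_distinct:
  assumes "sorted_wrt R xs" and "\<And>x y. R x y \<Longrightarrow> \<not> R y x"
  shows "distinct xs"
  using assms by (induction xs) auto

lemma sum_list_map_minus_one:
  "\<forall>x\<in>set xs. 0 < x \<Longrightarrow> sum_list (map (\<lambda>x. x - 1) xs) + length xs = sum_list xs"
  by (induction xs) auto

lemma qk_f_map_last:
  assumes sorted: "sorted_wrt R xs" and asym: "\<And>x y. R x y \<Longrightarrow> \<not> R y x"
    and x: "x \<in> set xs" "f x = i"
    and last: "\<forall>y\<in>set xs. f y = i \<longrightarrow> y = x \<or> R y x"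
    and no_inversion: "\<not> (\<exists>y\<in>set xs. \<exists>z\<in>set xs. R y z \<and> f y = Suc i \<and> f z = i)"
  shows "qk_f i (map f xs) = Some (map (f(x := Suc i)) xs)"
proof -
  have dist: "distinct xs" using sorted_wrt_asym_distinct[OF sorted asym] .
  have less: "R (xs ! p) (xs ! q) \<longleftrightarrow> p < q" if "p < length xs" "q < length xs" for p q
    using sorted_wrt_nth_iff_less[OF sorted asym that] .
  obtain p where p: "p < length xs" "xs ! p = x" using x(1) by (meson in_set_conv_nth)
  have max: "Max {k. k < length (map f xs) \<and> map f xs ! k = i} = p"
  proof (rule Max_eqI)
    fix q assume "q \<in> {k. k < length (map f xs) \<and> map f xs ! k = i}"
    then have q: "q < length xs" "f (xs ! q) = i" by auto
    then have "xs ! q = xs ! p \<or> R (xs ! q) (xs ! p)" using last nth_mem p(2) by blast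
    then show "q \<le> p" using less[OF q(1) p(1)] nth_eq_iff_index_eq[OF dist q(1) p(1)] by auto
  qed (use p x in auto)
  have no_word_inversion:
    "\<not> (\<exists>p q. p < q \<and> q < length (map f xs) \<and> map f xs ! p = i + 1 \<and> map f xs ! q = i)"
  proof
    assume "\<exists>p q. p < q \<and> q < length (map f xs) \<and> map f xs ! p = i + 1 \<and> map f xs ! q = i"
    then obtain p q where pq: "p < q" "q < length xs" "f (xs ! p) = Suc i" "f (xs ! q) = i" by auto
    then have "R (xs ! p) (xs ! q)" using less[of p q] by simp
    moreover have "xs ! p \<in> set xs" "xs ! q \<in> set xs" using pq by auto
    ultimately show False using no_inversion pq by blast
  qed
  have update: "(map f xs)[p := i + 1] = map (f(x := Suc i)) xs"
    using p dist by (auto intro!: nth_equalityI simp: nth_list_update nth_eq_iff_index_eq)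
  have "i \<in> set (map f xs)" using x by force
  with no_word_inversion
  have cond: "\<not> (i \<notin> set (map f xs) \<or>
      (\<exists>p q. p < q \<and> q < length (map f xs) \<and> map f xs ! p = i + 1 \<and> map f xs ! q = i))"
    by blast
  show ?thesis unfolding qk_f_def if_not_P[OF cond] max update by (rule refl)
qed

lemma qk_f_map_SomeE:
  assumes sorted: "sorted_wrt R xs" and asym: "\<And>x y. R x y \<Longrightarrow> \<not> R y x"
    and some: "qk_f i (map f xs) = Some ys"
  obtains x where "x \<in> set xs" "f x = i" "\<forall>y\<in>set xs. f y = i \<longrightarrow> y = x \<or> R y x"
    and "\<not> (\<exists>y\<in>set xs. \<exists>z\<in>set xs. R y z \<and> f y = Suc i \<and> f z = i)"
    and "ys = map (f(x := Suc i)) xs"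
proof -
  have less: "R (xs ! p) (xs ! q) \<longleftrightarrow> p < q" if "p < length xs" "q < length xs" for p q
    using sorted_wrt_nth_iff_less[OF sorted asym that] .
  define S where "S = {k. k < length xs \<and> f (xs ! k) = i}"
  have occurs: "i \<in> f ` set xs"
    and no_word_inversion:
      "\<not> (\<exists>p q. p < q \<and> q < length (map f xs) \<and> map f xs ! p = i + 1 \<and> map f xs ! q = i)"
    using some by (auto simp: qk_f_def split: if_splits)
  have "S \<noteq> {}" using occurs by (auto simp: S_def in_set_conv_nth)
  moreover have "finite S" by (simp add: S_def)
  ultimately have p: "Max S \<in> S" and max: "\<And>q. q \<in> S \<Longrightarrow> q \<le> Max S" by auto
  define x where "x = xs ! Max S"
  have x: "x \<in> set xs" "f x = i" using p by (auto simp: x_def S_def)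
  have last: "\<forall>y\<in>set xs. f y = i \<longrightarrow> y = x \<or> R y x"
  proof (intro ballI impI)
    fix y assume "y \<in> set xs" "f y = i"
    then obtain q where "q \<in> S" "xs ! q = y" by (auto simp: S_def in_set_conv_nth)
    then show "y = x \<or> R y x" using max[of q] less[of q "Max S"] p
      by (auto simp: S_def x_def le_less)
  qed
  have no_inversion: "\<not> (\<exists>y\<in>set xs. \<exists>z\<in>set xs. R y z \<and> f y = Suc i \<and> f z = i)"
  proof
    assume "\<exists>y\<in>set xs. \<exists>z\<in>set xs. R y z \<and> f y = Suc i \<and> f z = i"
    then obtain p q where "p < length xs" "q < length xs" "R (xs ! p) (xs ! q)"
      "f (xs ! p) = Suc i" "f (xs ! q) = i" by (metis in_set_conv_nth)
    then have "p < q \<and> q < length (map f xs) \<and> map f xs ! p = i + 1 \<and> map f xs ! q = i"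
      using less[of p q] by auto
    then show False using no_word_inversion by blast
  qed
  have "ys = map (f(x := Suc i)) xs"
    using qk_f_map_last[OF sorted asym x last no_inversion] some by simp
  then show ?thesis by (rule that[OF x last no_inversion])
qed

lemma digraph_iso_through_parametrizations:
  assumes f: "bij_betw f A V" and g: "bij_betw g A V'"
    and \<phi>: "\<And>a. a \<in> A \<Longrightarrow> \<phi> (f a) = g a"
    and E: "\<And>a b. a \<in> A \<Longrightarrow> b \<in> A \<Longrightarrow> (f a, f b) \<in> E \<longleftrightarrow> R a b"
    and E': "\<And>a b. a \<in> A \<Longrightarrow> b \<in> A \<Longrightarrow> (g a, g b) \<in> E' \<longleftrightarrow> R a b"
  shows "digraph_iso \<phi> V E V' E'"
proof -
  have param: "\<exists>a\<in>A. v = f a" if "v \<in> V" for v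
    using that f unfolding bij_betw_def by blast
  have inj: "inj_on f A" using f by (simp add: bij_betw_def)
  have "\<phi> v = (g \<circ> the_inv_into A f) v" if "v \<in> V" for v
    using param[OF that] inj \<phi> by (auto simp: the_inv_into_f_f)
  then have "bij_betw \<phi> V V' \<longleftrightarrow> bij_betw (g \<circ> the_inv_into A f) V V'"
    by (rule bij_betw_cong)
  moreover have "bij_betw (g \<circ> the_inv_into A f) V V'"
    using bij_betw_trans[OF bij_betw_the_inv_into[OF f] g] .
  moreover have "(u, v) \<in> E \<longleftrightarrow> (\<phi> u, \<phi> v) \<in> E'" if "u \<in> V" "v \<in> V" for u v
    using param[OF that(1)] param[OF that(2)] E E' \<phi> by auto
  ultimately show ?thesis by (simp add: digraph_iso_def)
qed

definition read_before :: "nat \<times> nat \<Rightarrow> nat \<times> nat \<Rightarrow> bool" where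
  "read_before c c' \<longleftrightarrow> snd c < snd c' \<or> (snd c = snd c' \<and> fst c' < fst c)"

lemma read_before_asym: "read_before c c' \<Longrightarrow> \<not> read_before c' c"
  by (auto simp: read_before_def)

definition reading_cells :: "nat list \<Rightarrow> (nat \<times> nat) list" where
  "reading_cells \<sigma> = concat (map (\<lambda>j. map (\<lambda>i. (i, j))
       (rev (filter (\<lambda>i. (i, j) \<in> qr_diagram \<sigma>) [1..<Suc (length \<sigma>)])))
     [1..<Suc (sum_list \<sigma>)])"

lemma col_reading_eq_map: "col_reading \<sigma> T = map T (reading_cells \<sigma>)"
  by (simp add: col_reading_def reading_cells_def map_concat comp_def)

lemma sorted_reading_cells: "sorted_wrt read_before (reading_cells \<sigma>)"
  unfolding reading_cells_def
proof (rule sorted_wrt_concat_map[where Q = "(<)"])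
  show "sorted_wrt (<) [1..<Suc (sum_list \<sigma>)]" by (rule sorted_wrt_upt)
next
  fix j
  have "sorted_wrt (<) (filter (\<lambda>i. (i, j) \<in> qr_diagram \<sigma>) [1..<Suc (length \<sigma>)])"
    by (intro sorted_wrt_filter sorted_wrt_upt)
  then show "sorted_wrt read_before
      (map (\<lambda>i. (i, j)) (rev (filter (\<lambda>i. (i, j) \<in> qr_diagram \<sigma>) [1..<Suc (length \<sigma>)])))"
    by (simp add: sorted_wrt_map sorted_wrt_rev read_before_def)
qed (auto simp: read_before_def)

lemma qr_diagram_bounds: "c \<in> qr_diagram \<sigma> \<Longrightarrow> 1 \<le> fst c \<and> fst c \<le> length \<sigma> \<and> 1 \<le> snd c"
  by (auto simp: qr_diagram_def qr_row_start_def)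

lemma set_reading_cells: "set (reading_cells \<sigma>) = {c \<in> qr_diagram \<sigma>. snd c \<le> sum_list \<sigma>}"
proof -
  have "set (reading_cells \<sigma>) =
      (\<Union>j\<in>{1..<Suc (sum_list \<sigma>)}. (\<lambda>i. (i, j)) ` {i \<in> {1..<Suc (length \<sigma>)}. (i, j) \<in> qr_diagram \<sigma>})"
    unfolding reading_cells_def set_concat set_map set_rev set_filter set_upt image_image ..
  also have "\<dots> = {c \<in> qr_diagram \<sigma>. snd c \<le> sum_list \<sigma>}"
    using qr_diagram_bounds by fastforce
  finally show ?thesis .
qed

lemma quasi_array_entry:
  assumes "is_quasi_array m Q" "1 \<le> i" "i \<le> m" "1 \<le> j" "j \<le> m - i + 1"
  shows "Q (i, j) = Q (1, i + j - 1) + (i - 1)" and "1 \<le> Q (i, j)"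
  using assms unfolding is_quasi_array_def by blast+

lemma quasi_array_outside:
  assumes "is_quasi_array m Q" "\<not> (1 \<le> i \<and> i \<le> m \<and> 1 \<le> j \<and> j \<le> m - i + 1)"
  shows "Q (i, j) = 0"
  using assms unfolding is_quasi_array_def by blast

lemma quasi_array_row_mono:
  assumes "is_quasi_array m Q" "1 \<le> j" "j \<le> j'" "j' \<le> m"
  shows "Q (1, j) \<le> Q (1, j')"
proof (rule lift_Suc_mono_le_ivl[of "{1..<m}" "\<lambda>j. Q (1, j)"])
  have "\<forall>k. 1 \<le> k \<and> k < m \<longrightarrow> Q (1, k) \<le> Q (1, Suc k)"
    using assms(1) unfolding is_quasi_array_def by blast
  then show "Q (1, k) \<le> Q (1, Suc k)" if "k \<in> {1..<m}" for k
    using that by simp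
qed (use assms in auto)

definition qa_of_row :: "nat \<Rightarrow> (nat \<Rightarrow> nat) \<Rightarrow> nat \<times> nat \<Rightarrow> nat" where
  "qa_of_row m a = (\<lambda>(i, j). if 1 \<le> i \<and> i \<le> m \<and> 1 \<le> j \<and> j \<le> m - i + 1
      then a (i + j - 1) + (i - 1) else 0)"

lemma qa_of_row_apply:
  "1 \<le> i \<Longrightarrow> i \<le> m \<Longrightarrow> 1 \<le> j \<Longrightarrow> j \<le> m - i + 1 \<Longrightarrow> qa_of_row m a (i, j) = a (i + j - 1) + (i - 1)"
  by (simp add: qa_of_row_def)

lemma is_quasi_array_qa_of_row:
  assumes pos: "1 \<le> m \<Longrightarrow> 1 \<le> a 1" and step: "\<And>j. 1 \<le> j \<Longrightarrow> j < m \<Longrightarrow> a j \<le> a (Suc j)"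
  shows "is_quasi_array m (qa_of_row m a)"
proof -
  have pos_all: "1 \<le> a j" if "1 \<le> j" "j \<le> m" for j
    using pos lift_Suc_mono_le_ivl[of "{1..<m}" a 1 j] step that by force
  show ?thesis unfolding is_quasi_array_def
  proof (intro conjI allI impI)
    fix i j assume "\<not> (1 \<le> i \<and> i \<le> m \<and> 1 \<le> j \<and> j \<le> m - i + 1)"
    then show "qa_of_row m a (i, j) = 0" unfolding qa_of_row_def by auto
  next
    fix i j assume ij: "1 \<le> i \<and> i \<le> m \<and> 1 \<le> j \<and> j \<le> m - i + 1"
    then have "1 \<le> a (i + j - 1)" by (intro pos_all) auto
    moreover have "qa_of_row m a (i, j) = a (i + j - 1) + (i - 1)"
      using ij by (simp add: qa_of_row_apply)
    ultimately show "1 \<le> qa_of_row m a (i, j)" by linarith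
    have "qa_of_row m a (1, i + j - 1) = a (i + j - 1)"
      using ij by (intro trans[OF qa_of_row_apply]) auto
    with \<open>qa_of_row m a (i, j) = a (i + j - 1) + (i - 1)\<close>
    show "qa_of_row m a (i, j) = qa_of_row m a (1, i + j - 1) + (i - 1)" by simp
  next
    fix j assume "1 \<le> j \<and> j < m"
    then show "qa_of_row m a (1, j) \<le> qa_of_row m a (1, Suc j)"
      using step by (simp add: qa_of_row_apply)
  qed
qed

lemma qa_of_row_first_row:
  assumes "is_quasi_array m Q"
  shows "qa_of_row m (\<lambda>j. Q (1, j)) = Q"
proof
  fix c :: "nat \<times> nat"
  obtain i j where c: "c = (i, j)" by fastforce
  show "qa_of_row m (\<lambda>j. Q (1, j)) c = Q c"
    unfolding c qa_of_row_def
    using quasi_array_entry(1)[OF assms, of i j] quasi_array_outside[OF assms, of i j] by auto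
qed

lemma quasi_array_eqI:
  assumes "is_quasi_array m Q" "is_quasi_array m Q'"
    and "\<And>j. 1 \<le> j \<Longrightarrow> j \<le> m \<Longrightarrow> Q (1, j) = Q' (1, j)"
  shows "Q = Q'"
proof -
  have "Q (1, i + j - 1) = Q' (1, i + j - 1)" if "1 \<le> i" "i \<le> m" "1 \<le> j" "j \<le> m - i + 1" for i j
    using that assms(3) by simp
  then have "qa_of_row m (\<lambda>j. Q (1, j)) = qa_of_row m (\<lambda>j. Q' (1, j))"
    by (auto simp: qa_of_row_def fun_eq_iff)
  then show ?thesis using qa_of_row_first_row assms(1,2) by metis
qed

definition qa_edge :: "nat \<Rightarrow> (nat \<times> nat \<Rightarrow> nat) \<Rightarrow> (nat \<times> nat \<Rightarrow> nat) \<Rightarrow> bool" where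
  "qa_edge m Q Q' \<longleftrightarrow> (\<exists>k\<in>{1..m}. (k < m \<longrightarrow> Q (1, k) < Q (1, Suc k)) \<and>
      (\<forall>j\<in>{1..m}. Q' (1, j) = (if j = k then Suc (Q (1, j)) else Q (1, j))))"

definition diag :: "nat \<times> nat \<Rightarrow> nat" where
  "diag c = fst c + snd c - 1"

locale qr_shape =
  fixes \<sigma> :: "nat list"
  assumes parts_pos: "\<forall>x\<in>set \<sigma>. 0 < x"
begin

abbreviation M :: nat where "M \<equiv> sum_list \<sigma>"
abbreviation D :: "(nat \<times> nat) set" where "D \<equiv> qr_diagram \<sigma>"

definition psum :: "nat \<Rightarrow> nat" where
  "psum i = sum_list (take i \<sigma>)"

lemma psum_Suc: "i < length \<sigma> \<Longrightarrow> psum (Suc i) = psum i + \<sigma> ! i"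
  by (simp add: psum_def take_Suc_conv_app_nth)

lemma psum_length: "psum (length \<sigma>) = M"
  by (simp add: psum_def)

lemma psum_gap: "i \<le> i' \<Longrightarrow> i' \<le> length \<sigma> \<Longrightarrow> psum i + (i' - i) \<le> psum i'"
proof (induction i' rule: dec_induct)
  case (step j)
  have "0 < \<sigma> ! j" using parts_pos step.hyps(2) step.prems by simp
  then show ?case using step psum_Suc[of j] by (simp add: Suc_diff_le)
qed simp

lemma qr_row_start_Suc: "i < length \<sigma> \<Longrightarrow> qr_row_start \<sigma> (Suc i) + i = 1 + psum i"
  using sum_list_map_minus_one[of "take i \<sigma>"] parts_pos
  by (auto simp: qr_row_start_def psum_def dest: in_set_takeD)

lemma mem_diagram_Suc_iff:
  "(Suc i, j) \<in> D \<longleftrightarrow> i < length \<sigma> \<and> psum i < i + j \<and> i + j \<le> psum (Suc i)"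
proof (cases "i < length \<sigma>")
  case True
  then show ?thesis using qr_row_start_Suc[OF True] psum_Suc[OF True]
    by (auto simp: qr_diagram_def)
qed (simp add: qr_diagram_def)

lemma diagram_cellE:
  assumes "c \<in> D"
  obtains i j where "c = (Suc i, j)" "i < length \<sigma>" "psum i < i + j" "i + j \<le> psum (Suc i)"
proof -
  obtain i j where "c = (Suc i, j)"
    using qr_diagram_bounds[OF assms] by (metis not0_implies_Suc not_one_le_zero prod.collapse)
  with assms that show ?thesis using mem_diagram_Suc_iff by blast
qed

lemma diag_bounds:
  assumes "c \<in> D"
  shows "fst c \<le> diag c" and "snd c \<le> diag c" and "1 \<le> diag c" and "diag c \<le> M"
proof -
  obtain i j where c: "c = (Suc i, j)" "i < length \<sigma>" "psum i < i + j" "i + j \<le> psum (Suc i)"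
    using assms by (rule diagram_cellE)
  have "psum 0 + i \<le> psum i" using psum_gap[of 0 i] c(2) by simp
  then have "1 \<le> j" using c(3) by (simp add: psum_def)
  moreover have "psum (Suc i) + (length \<sigma> - Suc i) \<le> M"
    using psum_gap[of "Suc i" "length \<sigma>"] c(2) psum_length by simp
  ultimately show "fst c \<le> diag c" "snd c \<le> diag c" "1 \<le> diag c" "diag c \<le> M"
    using c by (auto simp: diag_def)
qed

lemma diagram_in_triangle:
  assumes "c \<in> D"
  shows "1 \<le> fst c" "fst c \<le> M" "1 \<le> snd c" "snd c \<le> M - fst c + 1"
  using diag_bounds[OF assms] qr_diagram_bounds[OF assms] by (auto simp: diag_def)

lemma diagram_mono:
  assumes "c \<in> D" "c' \<in> D" "diag c \<le> diag c'"
  shows "fst c \<le> fst c'" and "snd c \<le> snd c'"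
proof -
  obtain i j where c: "c = (Suc i, j)" "i < length \<sigma>" "psum i < i + j" "i + j \<le> psum (Suc i)"
    using assms(1) by (rule diagram_cellE)
  obtain i' j'
    where c': "c' = (Suc i', j')" "i' < length \<sigma>" "psum i' < i' + j'" "i' + j' \<le> psum (Suc i')"
    using assms(2) by (rule diagram_cellE)
  have d: "i + j \<le> i' + j'" using assms(3) c c' by (simp add: diag_def)
  have "\<not> i' < i"
  proof
    assume "i' < i"
    then have "psum (Suc i') + (i - Suc i') \<le> psum i" using psum_gap c(2) by simp
    then show False using c c' d by linarith
  qed
  then have "i \<le> i'" by simp
  moreover have "j \<le> j'"
  proof (cases "i = i'")
    case False
    with \<open>i \<le> i'\<close> have "psum (Suc i) + (i' - Suc i) \<le> psum i'" using psum_gap c'(2) by simp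
    then show ?thesis using c c' \<open>i \<le> i'\<close> False by linarith
  qed (use d in simp)
  ultimately show "fst c \<le> fst c'" "snd c \<le> snd c'" using c c' by auto
qed

lemma inj_on_diag: "inj_on diag D"
proof (rule inj_onI)
  fix c c' assume "c \<in> D" "c' \<in> D" "diag c = diag c'"
  then show "c = c'" using diagram_mono[of c c'] diagram_mono[of c' c] by (simp add: prod_eq_iff)
qed

lemma diagram_stepE:
  assumes c: "c \<in> D" and "diag c < M"
  obtains c' where "c' \<in> D" "diag c' = Suc (diag c)"
    and "c' = (fst c, Suc (snd c)) \<or> c' = (Suc (fst c), snd c)"
proof -
  obtain i j where ij: "c = (Suc i, j)" "i < length \<sigma>" "psum i < i + j" "i + j \<le> psum (Suc i)"
    using c by (rule diagram_cellE)
  have "(Suc i, Suc j) \<in> D \<or> (Suc (Suc i), j) \<in> D"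
  proof (cases "i + j < psum (Suc i)")
    case True
    then show ?thesis using ij mem_diagram_Suc_iff by auto
  next
    case False
    then have row_end: "i + j = psum (Suc i)" using ij by simp
    have "Suc i < length \<sigma>"
    proof (rule ccontr)
      assume "\<not> Suc i < length \<sigma>"
      then have "Suc i = length \<sigma>" using ij by simp
      then show False using row_end psum_length assms(2) ij by (simp add: diag_def)
    qed
    then have "0 < \<sigma> ! Suc i" using parts_pos by simp
    then show ?thesis
      using mem_diagram_Suc_iff psum_Suc[OF \<open>Suc i < length \<sigma>\<close>] \<open>Suc i < length \<sigma>\<close> row_end by simp
  qed
  moreover have "diag (Suc i, Suc j) = Suc (diag c)" "diag (Suc (Suc i), j) = Suc (diag c)"
    using ij by (auto simp: diag_def)
  ultimately show ?thesis using that ij by auto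
qed

lemma diag_image: "diag ` D = {1..M}"
proof
  show "diag ` D \<subseteq> {1..M}" using diag_bounds by auto
  have "k \<le> M \<longrightarrow> 1 \<le> k \<longrightarrow> k \<in> diag ` D" for k
  proof (induction k)
    case (Suc k)
    show ?case
    proof (intro impI)
      assume k: "Suc k \<le> M"
      show "Suc k \<in> diag ` D"
      proof (cases "k = 0")
        case True
        have len: "0 < length \<sigma>" using k by (cases \<sigma>) auto
        then have "0 < \<sigma> ! 0" using parts_pos by simp
        then have "(Suc 0, 1) \<in> D"
          unfolding mem_diagram_Suc_iff using len psum_Suc[OF len] by (simp add: psum_def)
        then show ?thesis using True by (force simp: diag_def)
      next
        case False
        then obtain c where c: "c \<in> D" "diag c = k" using Suc.IH k by auto
        with k obtain c' where "c' \<in> D" "diag c' = Suc k" by (auto elim: diagram_stepE)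
        then show ?thesis by force
      qed
    qed
  qed simp
  then show "{1..M} \<subseteq> diag ` D" by auto
qed

lemma bij_betw_diag: "bij_betw diag D {1..M}"
  by (simp add: bij_betw_def inj_on_diag diag_image)

definition diag_cell :: "nat \<Rightarrow> nat \<times> nat" where
  "diag_cell = the_inv_into D diag"

lemma diag_cell_in_diagram: "k \<in> {1..M} \<Longrightarrow> diag_cell k \<in> D"
  unfolding diag_cell_def using bij_betw_apply[OF bij_betw_the_inv_into[OF bij_betw_diag]] .

lemma diag_diag_cell: "k \<in> {1..M} \<Longrightarrow> diag (diag_cell k) = k"
  unfolding diag_cell_def using f_the_inv_into_f_bij_betw[OF bij_betw_diag] .

lemma diag_cell_diag: "c \<in> D \<Longrightarrow> diag_cell (diag c) = c"
  unfolding diag_cell_def using the_inv_into_f_f[OF inj_on_diag] .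


lemma qa_on_diagram:
  assumes "is_quasi_array M Q" "c \<in> D"
  shows "Q c = Q (1, diag c) + (fst c - 1)" and "1 \<le> Q c"
  using quasi_array_entry[OF assms(1), of "fst c" "snd c"] diagram_in_triangle[OF assms(2)]
  by (auto simp: diag_def)

lemma qa_mono_on_diagram:
  assumes Q: "is_quasi_array M Q" and "c \<in> D" "c' \<in> D" "diag c \<le> diag c'"
  shows "Q c \<le> Q c'"
proof -
  have "Q (1, diag c) \<le> Q (1, diag c')"
    using quasi_array_row_mono[OF Q] diag_bounds assms(2-4) by simp
  moreover have "fst c \<le> fst c'" using diagram_mono assms(2-4) by blast
  ultimately show ?thesis
    using qa_on_diagram(1)[OF Q assms(2)] qa_on_diagram(1)[OF Q assms(3)] by simp
qed

lemma qa_proj_tableau: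
  assumes Q: "is_quasi_array M Q"
  shows "is_qr_tableau \<sigma> (qa_proj \<sigma> Q)"
proof -
  have rows: "Q (i, j) \<le> Q (i, Suc j)" if "(i, j) \<in> D" "(i, Suc j) \<in> D" for i j
    using qa_mono_on_diagram[OF Q that] diagram_in_triangle[OF that(1)] by (simp add: diag_def)
  have cols: "Q (i, j) < Q (Suc i, j)" if "(i, j) \<in> D" "(Suc i, j) \<in> D" for i j
  proof -
    have "Q (1, diag (i, j)) \<le> Q (1, diag (Suc i, j))"
      using diag_bounds(3)[OF that(1)] diag_bounds(4)[OF that(2)]
      by (intro quasi_array_row_mono[OF Q]) (auto simp: diag_def)
    then show ?thesis
      using qa_on_diagram(1)[OF Q that(1)] qa_on_diagram(1)[OF Q that(2)]
        diagram_in_triangle(1)[OF that(1)] by simp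
  qed
  show ?thesis
    using rows cols qa_on_diagram(2)[OF Q] by (auto simp: is_qr_tableau_def qa_proj_def)
qed

lemma inj_on_qa_proj: "inj_on (qa_proj \<sigma>) {Q. is_quasi_array M Q}"
proof (rule inj_onI)
  fix Q Q' assume Q: "Q \<in> {Q. is_quasi_array M Q}" and Q': "Q' \<in> {Q. is_quasi_array M Q}"
    and eq: "qa_proj \<sigma> Q = qa_proj \<sigma> Q'"
  show "Q = Q'"
  proof (rule quasi_array_eqI)
    fix j assume "1 \<le> j" "j \<le> M"
    then have c: "diag_cell j \<in> D" "diag (diag_cell j) = j"
      using diag_cell_in_diagram diag_diag_cell by auto
    have "Q (diag_cell j) = Q' (diag_cell j)" using eq c(1) by (metis qa_proj_def)
    moreover have "Q (diag_cell j) = Q (1, j) + (fst (diag_cell j) - 1)"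
      and "Q' (diag_cell j) = Q' (1, j) + (fst (diag_cell j) - 1)"
      using qa_on_diagram(1)[of _ "diag_cell j"] Q Q' c by auto
    ultimately show "Q (1, j) = Q' (1, j)" by simp
  qed (use Q Q' in auto)
qed

definition row_of_tableau :: "(nat \<times> nat \<Rightarrow> nat) \<Rightarrow> nat \<Rightarrow> nat" where
  "row_of_tableau T k = T (diag_cell k) + 1 - fst (diag_cell k)"

lemma row_of_tableau_step:
  assumes T: "is_qr_tableau \<sigma> T" and k: "1 \<le> k" "k < M"
  shows "row_of_tableau T k \<le> row_of_tableau T (Suc k)"
proof -
  obtain i j where c: "diag_cell k = (i, j)" by fastforce
  have "k \<in> {1..M}" using k by simp
  then have c_in: "(i, j) \<in> D" "diag (i, j) = k"
    using diag_cell_in_diagram diag_diag_cell c by metis+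
  with k obtain c' where c': "c' \<in> D" "diag c' = Suc k" and "c' = (i, Suc j) \<or> c' = (Suc i, j)"
    by (auto elim: diagram_stepE)
  moreover have "diag_cell (Suc k) = c'" using diag_cell_diag[OF c'(1)] c'(2) by simp
  moreover have "T (i, j) \<le> T (i, Suc j)" if "(i, Suc j) \<in> D"
    using T c_in(1) that unfolding is_qr_tableau_def by blast
  moreover have "T (i, j) < T (Suc i, j)" if "(Suc i, j) \<in> D"
    using T c_in(1) that unfolding is_qr_tableau_def by blast
  ultimately show ?thesis unfolding row_of_tableau_def c by auto
qed

lemma row_of_tableau_first:
  assumes T: "is_qr_tableau \<sigma> T" and "1 \<le> M"
  shows "1 \<le> row_of_tableau T 1"
proof -
  have c: "diag_cell 1 \<in> D" "diag (diag_cell 1) = 1"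
    using assms(2) diag_cell_in_diagram diag_diag_cell by auto
  then have "fst (diag_cell 1) = 1"
    using diag_bounds(1)[OF c(1)] diagram_in_triangle(1)[OF c(1)] by simp
  moreover have "1 \<le> T (diag_cell 1)" using T c(1) by (simp add: is_qr_tableau_def)
  ultimately show ?thesis by (simp add: row_of_tableau_def)
qed

lemma quasi_array_of_tableau:
  assumes T: "is_qr_tableau \<sigma> T"
  shows "is_quasi_array M (qa_of_row M (row_of_tableau T))"
    and "qa_proj \<sigma> (qa_of_row M (row_of_tableau T)) = T"
proof -
  let ?Q = "qa_of_row M (row_of_tableau T)"
  show Q: "is_quasi_array M ?Q"
    using row_of_tableau_first[OF T] row_of_tableau_step[OF T] by (rule is_quasi_array_qa_of_row)
  have "?Q c = T c" if c: "c \<in> D" for c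
  proof -
    have row: "?Q (1, diag c) = row_of_tableau T (diag c)"
      using diag_bounds[OF c] by (simp add: qa_of_row_apply)
    moreover have "1 \<le> ?Q (1, diag c)"
      using quasi_array_entry(2)[OF Q, of 1 "diag c"] diag_bounds[OF c] by simp
    moreover have "row_of_tableau T (diag c) = T c + 1 - fst c"
      by (simp add: row_of_tableau_def diag_cell_diag[OF c])
    moreover have "1 \<le> fst c" using diagram_in_triangle(1)[OF c] .
    ultimately show ?thesis using qa_on_diagram(1)[OF Q c] by simp
  qed
  moreover have "T c = 0" if "c \<notin> D" for c
    using T that unfolding is_qr_tableau_def by blast
  ultimately show "qa_proj \<sigma> ?Q = T" by (auto simp: qa_proj_def)
qed

lemma bij_betw_qa_proj: "bij_betw (qa_proj \<sigma>) {Q. is_quasi_array M Q} (hypo_vertices \<sigma>)"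
proof -
  have "qa_proj \<sigma> ` {Q. is_quasi_array M Q} = hypo_vertices \<sigma>"
  proof
    show "qa_proj \<sigma> ` {Q. is_quasi_array M Q} \<subseteq> hypo_vertices \<sigma>"
      using qa_proj_tableau by (auto simp: hypo_vertices_def)
    show "hypo_vertices \<sigma> \<subseteq> qa_proj \<sigma> ` {Q. is_quasi_array M Q}"
    proof
      fix T assume "T \<in> hypo_vertices \<sigma>"
      then have "is_qr_tableau \<sigma> T" by (simp add: hypo_vertices_def)
      from quasi_array_of_tableau[OF this] show "T \<in> qa_proj \<sigma> ` {Q. is_quasi_array M Q}"
        by (metis image_eqI mem_Collect_eq)
    qed
  qed
  then show ?thesis using inj_on_qa_proj by (simp add: bij_betw_def)
qed

lemma qa_bar_qa_proj: "is_quasi_array M Q \<Longrightarrow> qa_bar \<sigma> (qa_proj \<sigma> Q) = Q"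
  unfolding qa_bar_def by (rule the_equality) (auto dest: inj_onD[OF inj_on_qa_proj])


lemma set_reading_cells_eq_diagram: "set (reading_cells \<sigma>) = D"
  using set_reading_cells[of \<sigma>] diag_bounds(2,4) by fastforce

lemma col_reading_qa_proj: "col_reading \<sigma> (qa_proj \<sigma> Q) = map Q (reading_cells \<sigma>)"
  unfolding col_reading_eq_map
  by (rule map_cong) (auto simp: qa_proj_def set_reading_cells_eq_diagram)

lemma qa_column_gap:
  assumes Q: "is_quasi_array M Q" and c: "c \<in> D" "c' \<in> D"
    and "snd c = snd c'" "diag c \<le> diag c'"
  shows "Q c' = Q c + (diag c' - diag c) + (Q (1, diag c') - Q (1, diag c))"
proof -
  have "Q (1, diag c) \<le> Q (1, diag c')"
    using quasi_array_row_mono[OF Q] diag_bounds c assms(5) by simp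
  then obtain u where u: "Q (1, diag c') = Q (1, diag c) + u" using le_Suc_ex by blast
  obtain t where t: "fst c' = fst c + t" using diagram_mono(1)[OF c assms(5)] le_Suc_ex by blast
  have "1 \<le> fst c" using diagram_in_triangle(1)[OF c(1)] .
  with t assms(4) have "diag c' = diag c + t" by (simp add: diag_def)
  then show ?thesis
    using qa_on_diagram(1)[OF Q c(1)] qa_on_diagram(1)[OF Q c(2)] t u \<open>1 \<le> fst c\<close> by simp
qed

lemma qa_less_beyond_ascent:
  assumes Q: "is_quasi_array M Q" and c: "c \<in> D" "c' \<in> D" and "diag c < diag c'"
    and ascent: "Q (1, diag c) < Q (1, Suc (diag c))"
  shows "Q c < Q c'"
proof -
  have "Q (1, Suc (diag c)) \<le> Q (1, diag c')"
    using quasi_array_row_mono[OF Q] diag_bounds(4)[OF c(2)] assms(4) by simp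
  moreover have "fst c \<le> fst c'" using diagram_mono(1)[OF c] assms(4) by simp
  ultimately show ?thesis
    using qa_on_diagram(1)[OF Q c(1)] qa_on_diagram(1)[OF Q c(2)] ascent by simp
qed

definition raisable :: "(nat \<times> nat \<Rightarrow> nat) \<Rightarrow> nat \<times> nat \<Rightarrow> bool" where
  "raisable Q c \<longleftrightarrow> (diag c < M \<longrightarrow> Q (1, diag c) < Q (1, Suc (diag c)))"

lemma raisable_cell_last:
  assumes Q: "is_quasi_array M Q" and c: "c \<in> D"
    and raise: "raisable Q c"
  shows "\<forall>c'\<in>D. Q c' = Q c \<longrightarrow> c' = c \<or> read_before c' c"
proof (intro ballI impI)
  fix c' assume c': "c' \<in> D" and eq: "Q c' = Q c"
  show "c' = c \<or> read_before c' c"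
  proof (cases "c' = c")
    case False
    then have "diag c' \<noteq> diag c" using inj_on_diag c c' by (auto dest: inj_onD)
    moreover have "\<not> diag c < diag c'"
      using qa_less_beyond_ascent[OF Q c c'] raise diag_bounds(4)[OF c'] eq
      by (auto simp: raisable_def)
    ultimately have lt: "diag c' < diag c" by simp
    then have "snd c' \<le> snd c" using diagram_mono(2)[OF c' c] by simp
    moreover have "snd c' \<noteq> snd c"
      using qa_column_gap[OF Q c' c _ less_imp_le[OF lt]] lt eq by auto
    ultimately show ?thesis by (simp add: read_before_def)
  qed simp
qed

lemma raisable_cell_no_inversion:
  assumes Q: "is_quasi_array M Q" and c: "c \<in> D"
    and raise: "raisable Q c"
  shows "\<not> (\<exists>c1\<in>D. \<exists>c2\<in>D. read_before c1 c2 \<and> Q c1 = Suc (Q c) \<and> Q c2 = Q c)"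
proof
  assume "\<exists>c1\<in>D. \<exists>c2\<in>D. read_before c1 c2 \<and> Q c1 = Suc (Q c) \<and> Q c2 = Q c"
  then obtain c1 c2 where cs: "c1 \<in> D" "c2 \<in> D" and before: "read_before c1 c2"
    and vals: "Q c1 = Suc (Q c)" "Q c2 = Q c" by blast
  have lt: "diag c2 < diag c1"
    using qa_mono_on_diagram[OF Q cs(1,2)] vals by (metis Suc_n_not_le_n not_le_imp_less)
  then have "snd c2 \<le> snd c1" using diagram_mono(2)[OF cs(2,1)] by simp
  then have col: "snd c2 = snd c1" using before by (auto simp: read_before_def)
  have "Q c1 = Q c2 + (diag c1 - diag c2) + (Q (1, diag c1) - Q (1, diag c2))"
    using qa_column_gap[OF Q cs(2,1) col less_imp_le[OF lt]] .
  moreover have "Q (1, diag c2) \<le> Q (1, diag c1)"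
    using quasi_array_row_mono[OF Q] diag_bounds(3)[OF cs(2)] diag_bounds(4)[OF cs(1)] lt by simp
  ultimately have step: "diag c1 = Suc (diag c2)" and flat: "Q (1, diag c1) = Q (1, diag c2)"
    using lt vals by linarith+
  have "\<not> diag c < diag c2"
    using qa_less_beyond_ascent[OF Q c cs(2)] raise diag_bounds(4)[OF cs(2)] vals
    by (auto simp: raisable_def)
  moreover have "\<not> diag c1 \<le> diag c"
    using qa_mono_on_diagram[OF Q cs(1) c] vals by auto
  ultimately have "diag c2 = diag c" "diag c < M"
    using step diag_bounds(4)[OF cs(1)] by auto
  then show False using raise step flat by (simp add: raisable_def)
qed

lemma last_cell_raisable:
  assumes Q: "is_quasi_array M Q" and c: "c \<in> D"
    and last: "\<forall>c'\<in>D. Q c' = Q c \<longrightarrow> c' = c \<or> read_before c' c"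
    and no_inversion: "\<not> (\<exists>c1\<in>D. \<exists>c2\<in>D. read_before c1 c2 \<and> Q c1 = Suc (Q c) \<and> Q c2 = Q c)"
  shows "raisable Q c"
  unfolding raisable_def
proof (intro impI)
  assume "diag c < M"
  with c obtain c' where c': "c' \<in> D" "diag c' = Suc (diag c)"
    and next_cell: "c' = (fst c, Suc (snd c)) \<or> c' = (Suc (fst c), snd c)"
    by (rule diagram_stepE)
  show "Q (1, diag c) < Q (1, Suc (diag c))"
  proof (rule ccontr)
    assume "\<not> Q (1, diag c) < Q (1, Suc (diag c))"
    moreover have "Q (1, diag c) \<le> Q (1, Suc (diag c))"
      using quasi_array_row_mono[OF Q] diag_bounds(3)[OF c] diag_bounds(4)[OF c'(1)] c'(2) by simp
    ultimately have flat: "Q (1, diag c') = Q (1, diag c)" using c'(2) by simp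
    have "1 \<le> fst c" using diagram_in_triangle(1)[OF c] .
    from next_cell show False
    proof
      assume right: "c' = (fst c, Suc (snd c))"
      then have "Q c' = Q c"
        using flat qa_on_diagram(1)[OF Q c] qa_on_diagram(1)[OF Q c'(1)] by simp
      moreover have "c' \<noteq> c" "\<not> read_before c' c"
        using right by (auto simp: read_before_def prod_eq_iff)
      ultimately show False using last c'(1) by blast
    next
      assume down: "c' = (Suc (fst c), snd c)"
      then have "Q c' = Suc (Q c)"
        using flat qa_on_diagram(1)[OF Q c] qa_on_diagram(1)[OF Q c'(1)] \<open>1 \<le> fst c\<close> by simp
      moreover have "read_before c' c" using down by (simp add: read_before_def)
      ultimately show False using no_inversion c c'(1) by blast
    qed
  qed
qed

lemma qa_first_row_raise_iff:
  assumes Q: "is_quasi_array M Q" and Q': "is_quasi_array M Q'" and c: "c \<in> D"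
  shows "(\<forall>j\<in>{1..M}. Q' (1, j) = (if j = diag c then Suc (Q (1, j)) else Q (1, j)))
    \<longleftrightarrow> (\<forall>c'\<in>D. Q' c' = (Q(c := Suc (Q c))) c')"
proof -
  have entries: "Q c' = Q (1, diag c') + (fst c' - 1)" "Q' c' = Q' (1, diag c') + (fst c' - 1)"
    if "c' \<in> D" for c'
    using qa_on_diagram(1)[OF Q that] qa_on_diagram(1)[OF Q' that] by auto
  have same_cell: "diag c' = diag c \<longleftrightarrow> c' = c" if "c' \<in> D" for c'
    using inj_on_diag c that by (auto dest: inj_onD)
  show ?thesis
  proof
    assume row: "\<forall>j\<in>{1..M}. Q' (1, j) = (if j = diag c then Suc (Q (1, j)) else Q (1, j))"
    show "\<forall>c'\<in>D. Q' c' = (Q(c := Suc (Q c))) c'"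
    proof
      fix c' assume c': "c' \<in> D"
      have "diag c' \<in> {1..M}" using diag_bounds(3,4)[OF c'] by simp
      then have "Q' (1, diag c') = (if c' = c then Suc (Q (1, diag c')) else Q (1, diag c'))"
        using row same_cell[OF c'] by simp
      then show "Q' c' = (Q(c := Suc (Q c))) c'"
        using entries[OF c'] by (cases "c' = c") simp_all
    qed
  next
    assume cells: "\<forall>c'\<in>D. Q' c' = (Q(c := Suc (Q c))) c'"
    show "\<forall>j\<in>{1..M}. Q' (1, j) = (if j = diag c then Suc (Q (1, j)) else Q (1, j))"
    proof
      fix j assume j: "j \<in> {1..M}"
      then have cj: "diag_cell j \<in> D" "diag (diag_cell j) = j"
        using diag_cell_in_diagram diag_diag_cell by auto
      have same: "j = diag c \<longleftrightarrow> diag_cell j = c" using same_cell[OF cj(1)] cj(2) by simp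
      have "Q' (diag_cell j) = (Q(c := Suc (Q c))) (diag_cell j)" using cells cj(1) by blast
      then show "Q' (1, j) = (if j = diag c then Suc (Q (1, j)) else Q (1, j))"
        using entries[OF cj(1)] cj(2) same by (cases "diag_cell j = c") simp_all
    qed
  qed
qed

lemma qa_edge_iff_raise_cell:
  assumes Q: "is_quasi_array M Q" and Q': "is_quasi_array M Q'"
  shows "qa_edge M Q Q' \<longleftrightarrow> (\<exists>c\<in>D. raisable Q c \<and> (\<forall>c'\<in>D. Q' c' = (Q(c := Suc (Q c))) c'))"
proof -
  have "qa_edge M Q Q' \<longleftrightarrow> (\<exists>k\<in>diag ` D. (k < M \<longrightarrow> Q (1, k) < Q (1, Suc k)) \<and>
      (\<forall>j\<in>{1..M}. Q' (1, j) = (if j = k then Suc (Q (1, j)) else Q (1, j))))"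
    unfolding qa_edge_def diag_image ..
  also have "\<dots> \<longleftrightarrow> (\<exists>c\<in>D. raisable Q c \<and>
      (\<forall>j\<in>{1..M}. Q' (1, j) = (if j = diag c then Suc (Q (1, j)) else Q (1, j))))"
    unfolding raisable_def by blast
  also have "\<dots> \<longleftrightarrow> (\<exists>c\<in>D. raisable Q c \<and> (\<forall>c'\<in>D. Q' c' = (Q(c := Suc (Q c))) c'))"
    by (rule bex_cong[OF refl], rule conj_cong[OF refl], rule qa_first_row_raise_iff[OF Q Q'])
  finally show ?thesis .
qed

lemma reading_step_iff_raise_cell:
  assumes Q: "is_quasi_array M Q"
  shows "(\<exists>i\<ge>1. qk_f i (map Q (reading_cells \<sigma>)) = Some (map Q' (reading_cells \<sigma>)))
    \<longleftrightarrow> (\<exists>c\<in>D. raisable Q c \<and> (\<forall>c'\<in>D. Q' c' = (Q(c := Suc (Q c))) c'))"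
    (is "(\<exists>i\<ge>1. qk_f i (map Q ?L) = Some (map Q' ?L)) \<longleftrightarrow> _")
proof -
  note sorted = sorted_reading_cells[of \<sigma>] and asym = read_before_asym
    and L_eq = set_reading_cells_eq_diagram
  show ?thesis
  proof
    assume "\<exists>i\<ge>1. qk_f i (map Q ?L) = Some (map Q' ?L)"
    then obtain i where some: "qk_f i (map Q ?L) = Some (map Q' ?L)" by blast
    obtain c where c: "c \<in> D" "Q c = i"
      and last: "\<forall>c'\<in>D. Q c' = i \<longrightarrow> c' = c \<or> read_before c' c"
      and no_inversion: "\<not> (\<exists>c1\<in>D. \<exists>c2\<in>D. read_before c1 c2 \<and> Q c1 = Suc i \<and> Q c2 = i)"
      and update: "map Q' ?L = map (Q(c := Suc i)) ?L"
      by (rule qk_f_map_SomeE[OF sorted asym some, unfolded L_eq])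
    have "raisable Q c"
      using last_cell_raisable[OF Q c(1)] last no_inversion c(2) by simp
    moreover have "\<forall>c'\<in>D. Q' c' = (Q(c := Suc (Q c))) c'"
      using update c(2) L_eq by (simp add: map_eq_conv)
    ultimately show "\<exists>c\<in>D. raisable Q c \<and> (\<forall>c'\<in>D. Q' c' = (Q(c := Suc (Q c))) c')"
      using c(1) by blast
  next
    assume "\<exists>c\<in>D. raisable Q c \<and> (\<forall>c'\<in>D. Q' c' = (Q(c := Suc (Q c))) c')"
    then obtain c where c: "c \<in> D" and raise: "raisable Q c"
      and update: "\<forall>c'\<in>D. Q' c' = (Q(c := Suc (Q c))) c'" by blast
    have "qk_f (Q c) (map Q ?L) = Some (map (Q(c := Suc (Q c))) ?L)"
      using c raisable_cell_last[OF Q c raise] raisable_cell_no_inversion[OF Q c raise]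
      by (intro qk_f_map_last[OF sorted asym, unfolded L_eq]) simp_all
    also have "map (Q(c := Suc (Q c))) ?L = map Q' ?L"
      using update L_eq by (simp add: map_eq_conv)
    finally show "\<exists>i\<ge>1. qk_f i (map Q ?L) = Some (map Q' ?L)"
      using qa_on_diagram(2)[OF Q c] by blast
  qed
qed

lemma hypo_edges_qa_proj_iff:
  assumes Q: "is_quasi_array M Q" and Q': "is_quasi_array M Q'"
  shows "(qa_proj \<sigma> Q, qa_proj \<sigma> Q') \<in> hypo_edges \<sigma> \<longleftrightarrow> qa_edge M Q Q'"
proof -
  have "(qa_proj \<sigma> Q, qa_proj \<sigma> Q') \<in> hypo_edges \<sigma> \<longleftrightarrow>
      (\<exists>i\<ge>1. qk_f i (map Q (reading_cells \<sigma>)) = Some (map Q' (reading_cells \<sigma>)))"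
    using qa_proj_tableau[OF Q] qa_proj_tableau[OF Q']
    by (simp add: hypo_edges_def hypo_vertices_def col_reading_qa_proj)
  also have "\<dots> \<longleftrightarrow> (\<exists>c\<in>D. raisable Q c \<and> (\<forall>c'\<in>D. Q' c' = (Q(c := Suc (Q c))) c'))"
    by (rule reading_step_iff_raise_cell[OF Q])
  also have "\<dots> \<longleftrightarrow> qa_edge M Q Q'"
    using qa_edge_iff_raise_cell[OF Q Q'] by simp
  finally show ?thesis .
qed

end

theorem corollary4p2:
  fixes m :: nat and \<sigma> \<tau> :: "nat list"
  assumes "0 < m" and "is_composition m \<sigma>" and "is_composition m \<tau>"
  shows "digraph_iso (Psi \<sigma> \<tau>) (hypo_vertices \<sigma>) (hypo_edges \<sigma>)
                                 (hypo_vertices \<tau>) (hypo_edges \<tau>)"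
proof -
  interpret s: qr_shape \<sigma> using assms(2) by unfold_locales (simp add: is_composition_def)
  interpret t: qr_shape \<tau> using assms(3) by unfold_locales (simp add: is_composition_def)
  have size: "sum_list \<sigma> = m" "sum_list \<tau> = m"
    using assms(2,3) by (simp_all add: is_composition_def)
  show ?thesis
  proof (rule digraph_iso_through_parametrizations)
    show "bij_betw (qa_proj \<sigma>) {Q. is_quasi_array m Q} (hypo_vertices \<sigma>)"
      using s.bij_betw_qa_proj size by simp
    show "bij_betw (qa_proj \<tau>) {Q. is_quasi_array m Q} (hypo_vertices \<tau>)"
      using t.bij_betw_qa_proj size by simp
    show "Psi \<sigma> \<tau> (qa_proj \<sigma> Q) = qa_proj \<tau> Q" if "Q \<in> {Q. is_quasi_array m Q}" for Q
      using s.qa_bar_qa_proj that size by (simp add: Psi_def)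
    show "(qa_proj \<sigma> Q, qa_proj \<sigma> Q') \<in> hypo_edges \<sigma> \<longleftrightarrow> qa_edge m Q Q'"
      if "Q \<in> {Q. is_quasi_array m Q}" "Q' \<in> {Q. is_quasi_array m Q}" for Q Q'
      using s.hypo_edges_qa_proj_iff that size by simp
    show "(qa_proj \<tau> Q, qa_proj \<tau> Q') \<in> hypo_edges \<tau> \<longleftrightarrow> qa_edge m Q Q'"
      if "Q \<in> {Q. is_quasi_array m Q}" "Q' \<in> {Q. is_quasi_array m Q}" for Q Q'
      using t.hypo_edges_qa_proj_iff that size by simp
  qed
qed

end
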